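(* As Laurent series in $z$, $$\sum_{n\ge0}\binom{2n+2}{n}z^n=\frac{13}{z^2}+3\left(-\frac{z+1}{z^2}+3\frac{1-z-z^2}{z^2(1-z)}\right)\Psi(-z)+\left(4+\frac6z-\frac4{z^2}\right)\Psi^3(-z)+3\left(4z+2-\frac1z-\frac5{z^2}\right)\Psi^5(-z)\quad\text{modulo }27.$$
   Context: $\Psi(z)=\prod_{j\ge0}(1+z^{3^j})$, so $\Psi(-z)=\prod_{j\ge0}(1-z^{3^j})$. Rational functions are expanded as Laurent series in $z$; "modulo $27$" means all coefficients of the difference are divisible by $27$. *)

theory Defs
  imports "HOL-Computational_Algebra.Formal_Laurent_Series"
begin

text \<open>Psi(-z) = prod_{j>=0} (1 - z^(3^j)) as a formal power series over the rationals:
  the infinite product is the limit (in the X-adic topology) of its partial products;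
  the n-th coefficient is already fixed by the partial product over j < n+1,
  since the factors with 3^j > n do not affect coefficients of degree <= n.\<close>
definition Psi_neg :: "rat fps" where
  "Psi_neg = Abs_fps (\<lambda>n. fps_nth (\<Prod>j<Suc n. (1 - fps_X ^ (3 ^ j))) n)"

end

theory Submission
  imports Defs
begin

text \<open>
  Write F = Psi(-z), B = sum binom(2n, n) z^n and C = sum binom(2n + 2, n) z^n, so that
  B^2 (1 - 4z) = 1 and 4z^2 C = (2 - 4z) B - 2. Since (1 - y)^3 = 1 - y^3 mod 3, the partial
  products F_N of F satisfy (1 - z) F_N^2 = 1 - z^(3^N) mod 3, hence (1 - 4z) F^2 = 1 + 3T with
  T integral. Then F (1 - 3T/2) is a 3-adic approximation of F (1 + 3T)^(-1/2) = B: indeed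
  (F (2 - 3T) - 2B) (F (2 - 3T) + 2B) (1 - 4z) = 27 (T^3 - T^2), and the second factor has
  constant term 4, so F (2 - 3T) = 2B mod 27. Substituting this into 4z^2 C and eliminating F^2
  makes 8 (1 - 4z)^2 z^2 (1 - z) times the claimed difference a multiple of 27; as 8 (1 - 4z)^2
  is a unit modulo 27, the difference itself is one.
\<close>

definition int_coeffs :: "'a::comm_ring_1 fps \<Rightarrow> bool" where
  "int_coeffs f \<longleftrightarrow> (\<forall>n. f $ n \<in> \<int>)"

definition coeffs_dvd :: "int \<Rightarrow> 'a::comm_ring_1 fps \<Rightarrow> bool" where
  "coeffs_dvd m f \<longleftrightarrow> (\<forall>n. \<exists>k. f $ n = of_int (m * k))"

lemma int_coeffsE:
  assumes "int_coeffs f"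
  obtains a where "\<And>i. f $ i = of_int (a i)"
proof -
  have "\<forall>i. \<exists>k. f $ i = of_int k"
    using assms unfolding int_coeffs_def Ints_def by blast
  then show thesis
    using that by metis
qed

lemma int_coeffs_add [intro]: "int_coeffs f \<Longrightarrow> int_coeffs g \<Longrightarrow> int_coeffs (f + g)"
  by (auto simp: int_coeffs_def)

lemma int_coeffs_diff [intro]: "int_coeffs f \<Longrightarrow> int_coeffs g \<Longrightarrow> int_coeffs (f - g)"
  by (auto simp: int_coeffs_def)

lemma int_coeffs_mult [intro]: "int_coeffs f \<Longrightarrow> int_coeffs g \<Longrightarrow> int_coeffs (f * g)"
  unfolding int_coeffs_def fps_mult_nth by (auto intro!: Ints_sum Ints_mult)

lemma int_coeffs_one [intro]: "int_coeffs 1"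
  by (auto simp: int_coeffs_def)

lemma int_coeffs_power [intro]: "int_coeffs f \<Longrightarrow> int_coeffs (f ^ n)"
  by (induction n) (auto simp del: power_Suc simp: power_Suc2 int_coeffs_mult)

lemma int_coeffs_numeral [intro]: "int_coeffs (numeral k)"
  by (auto simp: int_coeffs_def numeral_fps_const)

lemma int_coeffs_fps_X [intro]: "int_coeffs fps_X"
  by (auto simp: int_coeffs_def fps_X_nth)

lemma int_coeffs_Abs_fps_of_nat [intro]: "int_coeffs (Abs_fps (\<lambda>n. of_nat (a n)))"
  by (auto simp: int_coeffs_def)

lemmas int_coeffs_intros =
  int_coeffs_add int_coeffs_diff int_coeffs_mult int_coeffs_power
  int_coeffs_numeral int_coeffs_one int_coeffs_fps_X

lemma coeffs_dvd_add [intro]: "coeffs_dvd m f \<Longrightarrow> coeffs_dvd m g \<Longrightarrow> coeffs_dvd m (f + g)"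
  unfolding coeffs_dvd_def by (metis fps_add_nth distrib_left of_int_add)

lemma coeffs_dvd_diff [intro]: "coeffs_dvd m f \<Longrightarrow> coeffs_dvd m g \<Longrightarrow> coeffs_dvd m (f - g)"
  unfolding coeffs_dvd_def by (metis fps_sub_nth right_diff_distrib of_int_diff)

lemma coeffs_dvd_mult_int_coeffs [intro]:
  assumes "coeffs_dvd m f" "int_coeffs g"
  shows "coeffs_dvd m (f * g)"
  unfolding coeffs_dvd_def
proof
  fix n
  obtain k where k: "\<And>i. f $ i = of_int (m * k i)"
    using assms(1) unfolding coeffs_dvd_def by metis
  obtain l where l: "\<And>i. g $ i = of_int (l i)"
    using int_coeffsE[OF assms(2)] by blast
  show "\<exists>j. (f * g) $ n = of_int (m * j)"
    by (rule exI[of _ "\<Sum>i=0..n. k i * l (n - i)"])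
       (simp add: fps_mult_nth k l sum_distrib_left mult.assoc)
qed

lemma coeffs_dvd_of_int_mult [intro]:
  assumes "int_coeffs g"
  shows "coeffs_dvd m (of_int m * g)"
proof -
  obtain a where "\<And>i. g $ i = of_int (a i)"
    using int_coeffsE[OF assms] by blast
  then show ?thesis
    unfolding coeffs_dvd_def by (auto simp: fps_of_int[symmetric])
qed

lemma coeffs_dvdE:
  fixes f :: "'a::field_char_0 fps"
  assumes "coeffs_dvd m f" "m \<noteq> 0"
  obtains g where "int_coeffs g" "f = of_int m * g"
proof
  show "int_coeffs (Abs_fps (\<lambda>n. f $ n / of_int m))"
    using assms unfolding coeffs_dvd_def int_coeffs_def
    by (metis Ints_of_int fps_nth_Abs_fps nonzero_mult_div_cancel_left of_int_0_eq_iff of_int_mult)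
  show "f = of_int m * Abs_fps (\<lambda>n. f $ n / of_int m)"
    by (rule fps_ext) (simp add: fps_of_int[symmetric] assms(2))
qed

lemma coeffs_dvd_cancel:
  fixes f u :: "'a::{comm_ring_1, ring_char_0} fps"
  assumes "coeffs_dvd m (f * u)" "int_coeffs f" "int_coeffs u"
    and "u $ 0 = of_int c" "coprime m c"
  shows "coeffs_dvd m f"
  unfolding coeffs_dvd_def
proof
  obtain a where a: "\<And>i. f $ i = of_int (a i)"
    using int_coeffsE[OF assms(2)] by blast
  obtain b where b: "\<And>i. u $ i = of_int (b i)"
    using int_coeffsE[OF assms(3)] by blast
  have b0: "b 0 = c"
    using assms(4) b by (metis of_int_eq_iff)
  fix n show "\<exists>k. f $ n = of_int (m * k)"
  proof (induction n rule: less_induct)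
    case (less n)
    then obtain k where k: "\<And>i. i < n \<Longrightarrow> a i = m * k i"
      by (metis a of_int_eq_iff)
    obtain r where r: "(f * u) $ n = of_int (m * r)"
      using assms(1) unfolding coeffs_dvd_def by blast
    have "(f * u) $ n = (\<Sum>i<n. f $ i * u $ (n - i)) + f $ n * u $ 0"
      by (simp add: fps_mult_nth atLeast0AtMost lessThan_Suc_atMost[symmetric])
    also have "\<dots> = of_int (m * (\<Sum>i<n. k i * b (n - i)) + a n * c)"
      by (simp add: a b b0 k sum_distrib_left mult.assoc)
    finally have "m * r = m * (\<Sum>i<n. k i * b (n - i)) + a n * c"
      using r by (simp only: of_int_eq_iff)
    then have "m dvd a n * c"
      by (metis add_diff_cancel_left' dvd_diff dvd_triv_left)
    then have "m dvd a n"
      using assms(5) by (simp add: coprime_dvd_mult_left_iff)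
    then show ?case
      by (auto simp: a elim!: dvdE)
  qed
qed

lemma fps_cutoff_mult_cong:
  assumes "fps_cutoff n f = fps_cutoff n f'" "fps_cutoff n g = fps_cutoff n g'"
  shows "fps_cutoff n (f * g) = fps_cutoff n (f' * g')"
proof -
  have "(f * g) $ k = (f' * g') $ k" if "k < n" for k
  proof -
    have "(f * g) $ k = (fps_cutoff n f * fps_cutoff n g) $ k"
      using that by (simp only: fps_cutoff_left_mult_nth fps_cutoff_right_mult_nth)
    also have "\<dots> = (f' * g') $ k"
      using that by (simp only: assms fps_cutoff_left_mult_nth fps_cutoff_right_mult_nth)
    finally show ?thesis .
  qed
  then show ?thesis
    by (simp add: fps_cutoff_eq_fps_cutoff_iff)
qed

lemma fps_cutoff_power_cong:
  assumes "fps_cutoff n f = fps_cutoff n f'"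
  shows "fps_cutoff n (f ^ k) = fps_cutoff n (f' ^ k)"
proof (induction k)
  case (Suc k)
  then show ?case
    using fps_cutoff_mult_cong[OF assms Suc] by (simp only: power_Suc)
qed simp

definition Psi_neg_partial :: "nat \<Rightarrow> 'a::comm_ring_1 fps" where
  "Psi_neg_partial N = (\<Prod>j<N. 1 - fps_X ^ 3 ^ j)"

lemma Psi_neg_partial_Suc:
  "Psi_neg_partial (Suc N) = Psi_neg_partial N * (1 - fps_X ^ 3 ^ N)"
  by (simp add: Psi_neg_partial_def)

lemma int_coeffs_Psi_neg_partial: "int_coeffs (Psi_neg_partial N)"
  unfolding Psi_neg_partial_def by (induction N) (auto simp del: power_Suc)

lemma fps_cutoff_Psi_neg_partial:
  assumes "M \<le> N"
  shows "fps_cutoff (3 ^ M) (Psi_neg_partial N) = fps_cutoff (3 ^ M) (Psi_neg_partial M)"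
  using assms
proof (induction N rule: dec_induct)
  case (step N)
  have "fps_cutoff (3 ^ M) (1 - fps_X ^ 3 ^ N) = fps_cutoff (3 ^ M) (1 :: 'a::comm_ring_1 fps)"
    using power_increasing[OF step(1), of "3::nat"]
    by (auto simp: fps_cutoff_eq_fps_cutoff_iff)
  then show ?case
    using fps_cutoff_mult_cong[OF step(3)] by (simp add: Psi_neg_partial_Suc)
qed simp

lemma Psi_neg_nth: "Psi_neg $ n = Psi_neg_partial (Suc n) $ n"
  by (simp only: Psi_neg_def Psi_neg_partial_def fps_nth_Abs_fps)

lemma fps_cutoff_Psi_neg:
  "fps_cutoff (Suc n) Psi_neg = fps_cutoff (Suc n) (Psi_neg_partial (Suc n))"
proof -
  have "Psi_neg $ i = Psi_neg_partial (Suc n) $ i" if "i \<le> n" for i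
  proof -
    have "i < 3 ^ Suc i"
      by (induction i) auto
    moreover have "fps_cutoff (3 ^ Suc i) (Psi_neg_partial (Suc n))
        = fps_cutoff (3 ^ Suc i) (Psi_neg_partial (Suc i) :: rat fps)"
      using that by (intro fps_cutoff_Psi_neg_partial) simp
    ultimately show ?thesis
      unfolding Psi_neg_nth fps_cutoff_eq_fps_cutoff_iff by metis
  qed
  then show ?thesis
    by (simp add: fps_cutoff_eq_fps_cutoff_iff)
qed

lemma Psi_neg_nth_0: "Psi_neg $ 0 = 1"
  by (simp add: Psi_neg_nth Psi_neg_partial_def)

lemma int_coeffs_Psi_neg: "int_coeffs Psi_neg"
  using int_coeffs_Psi_neg_partial unfolding int_coeffs_def Psi_neg_nth by blast

lemma Psi_neg_partial_sq_cong3: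
  "coeffs_dvd 3 ((1 - fps_X) * Psi_neg_partial N ^ 2 - (1 - fps_X ^ 3 ^ N))"
proof (induction N)
  case 0
  show ?case
    by (simp add: Psi_neg_partial_def coeffs_dvd_def exI[of _ 0])
next
  case (Suc N)
  define Y :: "'a fps" where "Y = fps_X ^ 3 ^ N"
  have Y3: "fps_X ^ 3 ^ Suc N = Y ^ 3"
    by (simp add: Y_def power_mult[symmetric] mult.commute)
  have "(1 - fps_X) * Psi_neg_partial (Suc N) ^ 2 - (1 - fps_X ^ 3 ^ Suc N)
      = ((1 - fps_X) * Psi_neg_partial N ^ 2 - (1 - Y)) * (1 - Y) ^ 2 + 3 * (Y ^ 2 - Y)"
    unfolding Psi_neg_partial_Suc Y3 Y_def[symmetric]
    by (simp add: algebra_simps power2_eq_square power3_eq_cube)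
  also have "\<dots> = ((1 - fps_X) * Psi_neg_partial N ^ 2 - (1 - Y)) * (1 - Y) ^ 2 + of_int 3 * (Y ^ 2 - Y)"
    by simp
  also have "coeffs_dvd 3 \<dots>"
    using Suc unfolding Y_def
    by (intro coeffs_dvd_add coeffs_dvd_mult_int_coeffs coeffs_dvd_of_int_mult) auto
  finally show ?case .
qed

lemma Psi_neg_sq_cong3: "coeffs_dvd 3 ((1 - 4 * fps_X) * Psi_neg ^ 2 - 1)"
  unfolding coeffs_dvd_def
proof
  fix n
  define P :: "rat fps" where "P = Psi_neg_partial (Suc n)"
  define Y :: "rat fps" where "Y = fps_X ^ 3 ^ Suc n"
  define D where "D = (1 - fps_X) * P ^ 2 - (1 - Y) - of_int 3 * (fps_X * P ^ 2)"
  have D_cong: "coeffs_dvd 3 D"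
    unfolding D_def P_def Y_def
    by (intro coeffs_dvd_diff coeffs_dvd_of_int_mult Psi_neg_partial_sq_cong3)
      (auto intro: int_coeffs_Psi_neg_partial)
  have "fps_cutoff (Suc n) ((1 - 4 * fps_X) * Psi_neg ^ 2 - 1)
      = fps_cutoff (Suc n) ((1 - 4 * fps_X) * P ^ 2 - 1)"
    unfolding fps_cutoff_diff P_def
    by (intro arg_cong2[where f = "(-)"] fps_cutoff_mult_cong fps_cutoff_power_cong
        fps_cutoff_Psi_neg refl)
  then have "((1 - 4 * fps_X) * Psi_neg ^ 2 - 1) $ n = ((1 - 4 * fps_X) * P ^ 2 - 1) $ n"
    by (simp add: fps_cutoff_eq_fps_cutoff_iff)
  also have "\<dots> = (D - Y) $ n"
    by (simp add: D_def algebra_simps)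
  also have "\<dots> = D $ n"
  proof -
    have "n < 3 ^ Suc n"
      by (induction n) auto
    then show ?thesis
      by (simp add: Y_def)
  qed
  finally show "\<exists>k. ((1 - 4 * fps_X) * Psi_neg ^ 2 - 1) $ n = of_int (3 * k)"
    using D_cong unfolding coeffs_dvd_def by simp
qed

lemma Psi_neg_sq_eq:
  obtains T where "int_coeffs T" "T $ 0 = 0" "(1 - 4 * fps_X) * Psi_neg ^ 2 = 1 + 3 * T"
proof -
  obtain T where T: "int_coeffs T" "(1 - 4 * fps_X) * Psi_neg ^ 2 - 1 = of_int 3 * T"
    using Psi_neg_sq_cong3 by (rule coeffs_dvdE) simp
  then have sq: "(1 - 4 * fps_X) * Psi_neg ^ 2 = 1 + 3 * T"
    by (simp add: algebra_simps)
  have "(1 + 3 * T) $ 0 = 1"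
    by (simp flip: sq add: Psi_neg_nth_0 power2_eq_square)
  then have "T $ 0 = 0"
    by (simp add: numeral_fps_const)
  with T(1) sq show thesis
    using that by blast
qed

lemma central_binomial_Suc:
  "(n + 1) * (2 * n + 2 choose (n + 1)) = (4 * n + 2) * (2 * n choose n)"
proof -
  have "2 * n + 1 choose n = 2 * n + 1 choose (n + 1)"
    using binomial_symmetric[of n "2 * n + 1"] by (simp add: Suc_diff_le)
  then have "(n + 1) * (2 * n + 2 choose (n + 1)) = 2 * (Suc n * (Suc (2 * n) choose Suc n))"
    using Suc_times_binomial[of n "2 * n + 1"] by simp
  also have "\<dots> = (4 * n + 2) * (2 * n choose n)"
    using Suc_times_binomial[of n "2 * n"] by simp
  finally show ?thesis .
qed

definition central_binomial_fps :: "'a::comm_ring_1 fps" where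
  "central_binomial_fps = Abs_fps (\<lambda>n. of_nat (2 * n choose n))"

lemma int_coeffs_central_binomial_fps: "int_coeffs central_binomial_fps"
  by (auto simp: central_binomial_fps_def int_coeffs_def)

lemma central_binomial_fps_deriv:
  "fps_deriv central_binomial_fps * (1 - 4 * fps_X) = 2 * (central_binomial_fps :: 'a::comm_ring_1 fps)"
proof (rule fps_ext)
  fix n
  define b :: "nat \<Rightarrow> 'a" where "b k = of_nat (2 * k choose k)" for k
  have b_nth: "central_binomial_fps $ k = b k" for k
    by (simp add: central_binomial_fps_def b_def)
  have rec: "of_nat (k + 1) * b (k + 1) = (4 * of_nat k + 2) * b k" for k
  proof -
    have "2 * (k + 1) = 2 * k + 2"
      by simp
    then show ?thesis
      unfolding b_def using arg_cong[OF central_binomial_Suc[of k], of "of_nat :: nat \<Rightarrow> 'a"]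
      by (simp only: of_nat_mult) (simp add: algebra_simps)
  qed
  have split: "fps_deriv central_binomial_fps * (1 - 4 * fps_X)
      = fps_deriv central_binomial_fps - fps_const 4 * (fps_X * fps_deriv central_binomial_fps)"
    by (simp add: algebra_simps numeral_fps_const)
  have two: "(2 * central_binomial_fps :: 'a fps) $ n = 2 * b n"
    by (simp add: numeral_fps_const b_nth)
  show "(fps_deriv central_binomial_fps * (1 - 4 * fps_X)) $ n = (2 * central_binomial_fps :: 'a fps) $ n"
  proof (cases n)
    case 0
    then show ?thesis
      using rec[of 0] by (simp add: split two b_nth)
  next
    case (Suc m)
    have "(fps_deriv central_binomial_fps * (1 - 4 * fps_X)) $ n
        = of_nat (n + 1) * b (n + 1) - 4 * (of_nat (m + 1) * b (m + 1))"
      by (simp only: split fps_sub_nth fps_mult_left_const_nth fps_X_mult_nth fps_deriv_nth b_nth)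
        (simp add: Suc)
    also have "\<dots> = (4 * of_nat n + 2) * b n - 4 * (of_nat n * b n)"
      by (simp only: rec Suc Suc_eq_plus1)
    also have "\<dots> = 2 * b n"
      by (simp add: algebra_simps)
    finally show ?thesis
      by (simp only: two)
  qed
qed

lemma central_binomial_fps_sq:
  "central_binomial_fps ^ 2 * (1 - 4 * fps_X) = (1 :: 'a::{idom, ring_char_0} fps)"
proof -
  let ?f = "central_binomial_fps ^ 2 * (1 - 4 * fps_X) :: 'a fps"
  have "fps_deriv ?f = 2 * central_binomial_fps * (fps_deriv central_binomial_fps * (1 - 4 * fps_X))
      - 4 * central_binomial_fps ^ 2"
    by (simp add: fps_deriv_power algebra_simps power2_eq_square numeral_fps_const)
  also have "\<dots> = 0"
    by (simp add: central_binomial_fps_deriv power2_eq_square)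
  finally have "?f = fps_const (?f $ 0)"
    by (metis fps_deriv_eq_0_iff)
  also have "?f $ 0 = 1"
    by (simp add: central_binomial_fps_def power2_eq_square)
  finally show ?thesis
    by simp
qed

lemma central_binomial_pascal:
  "2 * (m + 2) choose (m + 2) = 2 * (2 * m + 2 choose m) + 2 * (2 * (m + 1) choose (m + 1))"
proof -
  have "2 * m + 2 choose (m + 2) = 2 * m + 2 choose m"
    using binomial_symmetric[of m "2 * m + 2"] by simp
  moreover have "2 * (m + 2) choose (m + 2) = Suc (Suc (2 * m + 2)) choose Suc (Suc m)"
    by (simp add: numeral_eq_Suc)
  ultimately show ?thesis
    by (simp add: numeral_eq_Suc)
qed

lemma shifted_central_binomial_fps:
  "4 * fps_X ^ 2 * Abs_fps (\<lambda>n. of_nat (2 * n + 2 choose n))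
    = (2 - 4 * fps_X) * central_binomial_fps - (2 :: 'a::comm_ring_1 fps)"
proof (rule fps_ext)
  fix n
  let ?C = "Abs_fps (\<lambda>n. of_nat (2 * n + 2 choose n)) :: 'a fps"
  let ?B = "central_binomial_fps :: 'a fps"
  have lhs: "(4 * fps_X ^ 2 * ?C) $ n = (if n < 2 then 0 else 4 * ?C $ (n - 2))"
    by (simp only: mult.assoc numeral_fps_const fps_mult_left_const_nth fps_X_power_mult_nth) simp
  have "(2 - 4 * fps_X) * ?B - 2 = fps_const 2 * ?B - fps_const 4 * (fps_X * ?B) - fps_const 2"
    by (simp add: algebra_simps numeral_fps_const)
  then have rhs: "((2 - 4 * fps_X) * ?B - 2) $ n
      = 2 * ?B $ n - (if n = 0 then 0 else 4 * ?B $ (n - 1)) - (if n = 0 then 2 else 0)"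
    by (simp only: fps_sub_nth fps_mult_left_const_nth fps_X_mult_nth) simp
  show "(4 * fps_X ^ 2 * ?C) $ n = ((2 - 4 * fps_X) * ?B - 2) $ n"
  proof (cases "n < 2")
    case True
    then show ?thesis
      using lhs rhs by (auto simp: central_binomial_fps_def less_2_cases_iff)
  next
    case False
    then obtain m where n: "n = m + 2"
      by (metis add.commute le_Suc_ex not_less)
    define b where "b k = (of_nat (2 * k choose k) :: 'a)" for k
    define c where "c k = (of_nat (2 * k + 2 choose k) :: 'a)" for k
    have pascal: "b (m + 2) = 2 * c m + 2 * b (m + 1)"
      unfolding b_def c_def
      using arg_cong[OF central_binomial_pascal[of m], of "of_nat :: nat \<Rightarrow> 'a"]
      by (simp only: of_nat_add of_nat_mult of_nat_numeral)
    have "(4 * fps_X ^ 2 * ?C) $ n = 4 * c m"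
      using lhs by (simp add: n c_def)
    moreover have "((2 - 4 * fps_X) * ?B - 2) $ n = 2 * b (m + 2) - 4 * b (m + 1)"
      using rhs by (simp add: n b_def central_binomial_fps_def)
    moreover have "2 * b (m + 2) - 4 * b (m + 1) = 4 * c m"
      unfolding pascal by (simp add: algebra_simps)
    ultimately show ?thesis
      by (simp only:)
  qed
qed

lemma central_binomial_fps_cong27:
  fixes F T :: "'a::{idom, ring_char_0} fps"
  assumes "int_coeffs F" "int_coeffs T" "F $ 0 = 1" "T $ 0 = 0"
    and "(1 - 4 * fps_X) * F ^ 2 = 1 + 3 * T"
  shows "coeffs_dvd 27 (F * (2 - 3 * T) - 2 * central_binomial_fps)"
proof -
  define w :: "'a fps" where "w = 1 - 4 * fps_X"
  define B :: "'a fps" where "B = central_binomial_fps"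
  have "w * B ^ 2 = 1"
    using central_binomial_fps_sq by (simp add: w_def B_def mult.commute)
  then have "(F * (2 - 3 * T) - 2 * B) * ((F * (2 - 3 * T) + 2 * B) * w) = 27 * (T ^ 3 - T ^ 2)"
    using assms(5) unfolding w_def[symmetric] by algebra
  then have "coeffs_dvd 27 ((F * (2 - 3 * T) - 2 * B) * ((F * (2 - 3 * T) + 2 * B) * w))"
    using coeffs_dvd_of_int_mult[of "T ^ 3 - T ^ 2" 27] assms(2) by auto
  then show ?thesis
    unfolding B_def
  proof (rule coeffs_dvd_cancel)
    show "int_coeffs (F * (2 - 3 * T) - 2 * central_binomial_fps)"
      "int_coeffs ((F * (2 - 3 * T) + 2 * central_binomial_fps) * w)"
      unfolding w_def
      by (intro int_coeffs_intros int_coeffs_central_binomial_fps assms(1,2))+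
    show "((F * (2 - 3 * T) + 2 * central_binomial_fps) * w) $ 0 = of_int 4"
      by (simp add: w_def assms(3,4) central_binomial_fps_def)
    show "coprime 27 (4::int)"
      by (simp add: coprime_iff_gcd_eq_1 gcd_non_0_int)
  qed
qed

definition rhs_numerator :: "'a::comm_ring_1 \<Rightarrow> 'a \<Rightarrow> 'a" where
  "rhs_numerator z P = 13 * (1 - z) + (6 - 9 * z - 6 * z ^ 2) * P
    + (1 - z) * (4 * z ^ 2 + 6 * z - 4) * P ^ 3 + 3 * (1 - z) * (4 * z ^ 3 + 2 * z ^ 2 - z - 5) * P ^ 5"

lemma rhs_numerator_cong27:
  fixes F T V :: "'a::{idom, ring_char_0} fps"
  defines "x \<equiv> fps_X :: 'a fps"
  assumes "int_coeffs F" "int_coeffs T" "int_coeffs V"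
    and "(1 - 4 * x) * F ^ 2 = 1 + 3 * T" "F * (2 - 3 * T) - 2 * central_binomial_fps = 27 * V"
  shows "coeffs_dvd 27 (x ^ 2 * (1 - x) * Abs_fps (\<lambda>n. of_nat (2 * n + 2 choose n))
    - rhs_numerator x F)"
proof -
  define w where "w = 1 - 4 * x"
  define C :: "'a fps" where "C = Abs_fps (\<lambda>n. of_nat (2 * n + 2 choose n))"
  \<comment> \<open>the quotient by 27 left after reducing F^3 and F^5 with (1 - 4x) F^2 = 1 + 3T\<close>
  let ?Q = "(4 + 4 * x - 32 * x ^ 2 + 16 * x ^ 3 + 32 * x ^ 4) + T * (30 - 42 * x + 12 * x ^ 2)
      + T ^ 2 * (40 - 32 * x - 24 * x ^ 2 - 16 * x ^ 3 + 32 * x ^ 4)"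
  let ?K = "F * ?Q - 4 * (1 - x) * w ^ 2 - w ^ 2 * (1 - x) * (2 - 4 * x) * V"
  have "4 * x ^ 2 * C = (2 - 4 * x) * central_binomial_fps - 2"
    unfolding x_def C_def by (rule shifted_central_binomial_fps)
  then have "(x ^ 2 * (1 - x) * C - rhs_numerator x F) * (8 * w ^ 2)
      = w ^ 2 * ((1 - x) * ((2 - 4 * x) * (F * (2 - 3 * T)) - 4) - 8 * rhs_numerator x F)
        - 27 * (w ^ 2 * (1 - x) * (2 - 4 * x) * V)"
    using assms(6) by algebra
  also have "\<dots> = 27 * ?K"
    using assms(5) unfolding w_def rhs_numerator_def by algebra
  finally have "coeffs_dvd 27 ((x ^ 2 * (1 - x) * C - rhs_numerator x F) * (8 * w ^ 2))"
    using coeffs_dvd_of_int_mult[of ?K 27] assms(2-4)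
    unfolding w_def x_def by (simp add: int_coeffs_intros)
  then show ?thesis
    unfolding C_def[symmetric]
  proof (rule coeffs_dvd_cancel)
    show "int_coeffs (x ^ 2 * (1 - x) * C - rhs_numerator x F)" "int_coeffs (8 * w ^ 2)"
      unfolding C_def x_def w_def rhs_numerator_def
      by (intro int_coeffs_intros assms(2) int_coeffs_Abs_fps_of_nat)+
    show "(8 * w ^ 2) $ 0 = of_int 8"
      by (simp add: w_def x_def power2_eq_square)
    show "coprime 27 (8::int)"
      by (simp add: coprime_iff_gcd_eq_1 gcd_non_0_int)
  qed
qed

lemma shifted_central_binomial_cong27:
  "coeffs_dvd 27 (fps_X ^ 2 * (1 - fps_X) * Abs_fps (\<lambda>n. of_nat (2 * n + 2 choose n))
    - rhs_numerator fps_X Psi_neg)"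
proof -
  obtain T where T: "int_coeffs T" "T $ 0 = 0" "(1 - 4 * fps_X) * Psi_neg ^ 2 = 1 + 3 * T"
    by (rule Psi_neg_sq_eq)
  have "coeffs_dvd 27 (Psi_neg * (2 - 3 * T) - 2 * central_binomial_fps)"
    using int_coeffs_Psi_neg T Psi_neg_nth_0 by (intro central_binomial_fps_cong27)
  then obtain V where "int_coeffs V"
    "Psi_neg * (2 - 3 * T) - 2 * central_binomial_fps = of_int 27 * V"
    by (rule coeffs_dvdE) simp
  with T int_coeffs_Psi_neg show ?thesis
    by (intro rhs_numerator_cong27) simp_all
qed

lemma ones_mult_one_minus_fps_X: "Abs_fps (\<lambda>_. 1) * (1 - fps_X) = (1 :: 'a::comm_ring_1 fps)"
  by (rule fps_ext) (simp add: algebra_simps fps_X_mult_right_nth)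

lemma fls_coeffs_dvd_if_mult_eq:
  fixes E :: "'a::field fls"
  assumes "E * (fls_X ^ 2 * (1 - fls_X)) = fps_to_fls G" "coeffs_dvd m G"
  shows "\<exists>k. fls_nth E n = of_int (m * k)"
proof -
  define H where "H = G * Abs_fps (\<lambda>_. 1)"
  have "coeffs_dvd m H"
    unfolding H_def using assms(2) by (rule coeffs_dvd_mult_int_coeffs) (simp add: int_coeffs_def)
  have "fls_nth (1 - fls_X :: 'a fls) 0 = 1"
    by simp
  then have "1 - fls_X \<noteq> (0 :: 'a fls)"
    by force
  moreover have "fps_to_fls H * (1 - fls_X) = fps_to_fls (H * (1 - fps_X))"
    by (simp add: fls_times_fps_to_fls)
  then have "fps_to_fls G = fps_to_fls H * (1 - fls_X)"
    by (simp add: H_def mult.assoc ones_mult_one_minus_fps_X)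
  ultimately have "E * fls_X ^ 2 = fps_to_fls H"
    using assms(1) by (simp add: mult.assoc)
  moreover have "fls_shift 2 (fps_to_fls H) * fls_X ^ 2 = fps_to_fls H"
    unfolding fls_X_power_times_conv_shift by simp
  ultimately have "E = fls_shift 2 (fps_to_fls H)"
    by (metis mult_right_cancel power_not_zero fls_X_nonzero)
  then show ?thesis
    using \<open>coeffs_dvd m H\<close> unfolding coeffs_dvd_def
    by (auto intro: exI[of _ 0])
qed

lemma clear_denominators:
  fixes z P :: "'a::field"
  assumes "z \<noteq> 0" "1 - z \<noteq> 0"
  shows "(13 / z^2
        + 3 * (- (z + 1) / z^2 + 3 * ((1 - z - z^2) / (z^2 * (1 - z)))) * P
        + (4 + 6 / z - 4 / z^2) * P^3
        + 3 * (4*z + 2 - 1/z - 5/z^2) * P^5) * (z ^ 2 * (1 - z))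
    = rhs_numerator z P"
  using assms
  by (simp add: rhs_numerator_def field_simps power2_eq_square power3_eq_cube)

lemma fps_to_fls_rhs_numerator:
  "fps_to_fls (rhs_numerator f g) = rhs_numerator (fps_to_fls f) (fps_to_fls g)"
  by (simp add: rhs_numerator_def fls_times_fps_to_fls fps_to_fls_power)

theorem theorem5p1:
  fixes z P :: "rat fls"
  assumes "z = fls_X" and "P = fps_to_fls Psi_neg"
  shows "\<forall>n::int. \<exists>k::int.
    fls_nth (fps_to_fls (Abs_fps (\<lambda>n. of_nat ((2*n+2) choose n)))
     - (13 / z^2
        + 3 * (- (z + 1) / z^2 + 3 * ((1 - z - z^2) / (z^2 * (1 - z)))) * P
        + (4 + 6 / z - 4 / z^2) * P^3
        + 3 * (4*z + 2 - 1/z - 5/z^2) * P^5)) n = of_int (27 * k)"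
    (is "\<forall>n. \<exists>k. fls_nth (fps_to_fls ?C - ?E) n = _")
proof -
  have "z \<noteq> 0"
    using assms(1) by simp
  moreover have "fls_nth (1 - z) 0 = 1"
    using assms(1) by simp
  then have "1 - z \<noteq> 0"
    by force
  ultimately have "?E * (z ^ 2 * (1 - z)) = rhs_numerator z P"
    by (rule clear_denominators)
  then have "(fps_to_fls ?C - ?E) * (z ^ 2 * (1 - z))
      = fps_to_fls ?C * (z ^ 2 * (1 - z)) - rhs_numerator z P"
    by (simp only: left_diff_distrib[of "fps_to_fls ?C"])
  also have "\<dots> = fps_to_fls (fps_X ^ 2 * (1 - fps_X) * ?C - rhs_numerator fps_X Psi_neg)"
    unfolding assms
    by (simp add: fps_to_fls_rhs_numerator fls_times_fps_to_fls fps_to_fls_power mult.commute)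
  finally show ?thesis
    using fls_coeffs_dvd_if_mult_eq shifted_central_binomial_cong27 unfolding assms(1) by blast
qed

end
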